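(* Let $L$ be a probability measure on $\mathbb{N}$ and $F:\mathbb{N}\to\mathbb{N}$ a function with $\max_ic_i\le F(n)$ for all $n\in\mathbb{N}$. Define $\mathbf g=(g_1,\dots,g_D):[0,1]^D\times\mathcal S\to\mathbb{R}^D$ by $$g_i(\mathbf x,\tau,a,u)=\frac{1}{F(\tau)}\Big[\sum_{j=1}^D\sum_{m=1}^\infty a_{jm}\mathbf 1_{\{u_{jm}\le x_j\}}\Big]-x_i .$$ Then there is a constant $K_c$ such that for all $\mathbf x,\mathbf z\in[0,1]^D$ and all $i=1,\dots,D$, $$\int_{\mathcal S}|g_i(\mathbf z,\tau,a,u)-g_i(\mathbf x,\tau,a,u)|\,\mathfrak A^{(i)}(d\tau,da)\,du\le K_c\|\mathbf x-\mathbf z\|.$$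
   Context: $D\in\mathbb{N}$; $c_{ij}\in\mathbb{N}_0$ ($i\ne j$) with $c_i:=\sum_{j\ne i}c_{ij}=\sum_{j\ne i}c_{ji}$. $\mathcal S=\mathbb{N}_0\times\mathbb{N}_0^{D\times\mathbb{N}}\times[0,1]^{D\times\mathbb{N}}$, $du$ is the product uniform (Lebesgue) measure on $[0,1]^{D\times\mathbb{N}}$, $\|\cdot\|$ the Euclidean norm, and $\mathfrak A^{(i)}(d\tau,da)=L(d\tau)A^{(i)}(\tau,da)$ where $A^{(i)}(\tau,\cdot)$ is the law of $(a_{jm}(\tau))_{j,m}$ for the Markov chain over $r=1,\dots,\tau$: $a_{im}(1)=1$ for $m\le F(1)-c_i$ (else $0$), for $j\ne i$ $a_{jm}(1)=1$ for $m\le c_{ji}$ (else $0$); from $r$ to $r+1$ each of $F(r+1)-c_i$ individuals independently picks family $(j,m)$ with probability $a_{jm}(r)/F(r)$, existing family sizes become the numbers of picks, and for each $j\ne i$ new families $a_{jm}(r+1)=1$, $c_{ji}r<m\le c_{ji}(r+1)$, are added. *)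

theory Defs
  imports "HOL-Probability.Probability"
begin

text \<open>Types are indexed by 1..D; families are pairs (j,m) with j in 1..D, m >= 1.
A state a is represented as a multiset of families: count a (j,m) = a_jm.\<close>

definition csum :: "nat \<Rightarrow> (nat \<Rightarrow> nat \<Rightarrow> nat) \<Rightarrow> nat \<Rightarrow> nat" where
  "csum D c i = (\<Sum>j\<in>{1..D} - {i}. c i j)"

primrec picks :: "'a multiset \<Rightarrow> nat \<Rightarrow> 'a multiset pmf" where
  "picks M 0 = return_pmf {#}"
| "picks M (Suc n) = bind_pmf (pmf_of_multiset M) (\<lambda>x. map_pmf (add_mset x) (picks M n))"

definition init_state :: "nat \<Rightarrow> (nat \<Rightarrow> nat \<Rightarrow> nat) \<Rightarrow> (nat \<Rightarrow> nat) \<Rightarrow> nat \<Rightarrow> (nat \<times> nat) multiset" where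
  "init_state D c F i = mset_set ({i} \<times> {1..F 1 - csum D c i})
      + mset_set (\<Union>j\<in>{1..D} - {i}. {j} \<times> {1..c j i})"

definition new_families :: "nat \<Rightarrow> (nat \<Rightarrow> nat \<Rightarrow> nat) \<Rightarrow> nat \<Rightarrow> nat \<Rightarrow> (nat \<times> nat) multiset" where
  "new_families D c i r = mset_set (\<Union>j\<in>{1..D} - {i}. {j} \<times> {c j i * r <.. c j i * (r + 1)})"

definition step :: "nat \<Rightarrow> (nat \<Rightarrow> nat \<Rightarrow> nat) \<Rightarrow> (nat \<Rightarrow> nat) \<Rightarrow> nat \<Rightarrow> nat
    \<Rightarrow> (nat \<times> nat) multiset \<Rightarrow> (nat \<times> nat) multiset pmf" where
  "step D c F i r M = map_pmf (\<lambda>N. N + new_families D c i r) (picks M (F (r + 1) - csum D c i))"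

text \<open>famproc D c F i k is the law of the state at time r = k+1.\<close>
primrec famproc :: "nat \<Rightarrow> (nat \<Rightarrow> nat \<Rightarrow> nat) \<Rightarrow> (nat \<Rightarrow> nat) \<Rightarrow> nat \<Rightarrow> nat
    \<Rightarrow> (nat \<times> nat) multiset pmf" where
  "famproc D c F i 0 = return_pmf (init_state D c F i)"
| "famproc D c F i (Suc k) = bind_pmf (famproc D c F i k) (step D c F i (Suc k))"

definition Achain :: "nat \<Rightarrow> (nat \<Rightarrow> nat \<Rightarrow> nat) \<Rightarrow> (nat \<Rightarrow> nat) \<Rightarrow> nat \<Rightarrow> nat
    \<Rightarrow> (nat \<times> nat) multiset pmf" where
  "Achain D c F i \<tau> = famproc D c F i (\<tau> - 1)"

definition Afrak :: "nat pmf \<Rightarrow> nat \<Rightarrow> (nat \<Rightarrow> nat \<Rightarrow> nat) \<Rightarrow> (nat \<Rightarrow> nat) \<Rightarrow> nat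
    \<Rightarrow> (nat \<times> (nat \<times> nat) multiset) pmf" where
  "Afrak L D c F i = bind_pmf L (\<lambda>\<tau>. map_pmf (\<lambda>a. (\<tau>, a)) (Achain D c F i \<tau>))"

definition Umeas :: "nat \<Rightarrow> (nat \<times> nat \<Rightarrow> real) measure" where
  "Umeas D = PiM ({1..D} \<times> {1..}) (\<lambda>_. uniform_measure lborel {0..1::real})"

definition gfun :: "nat \<Rightarrow> (nat \<Rightarrow> nat) \<Rightarrow> nat \<Rightarrow> (nat \<Rightarrow> real) \<Rightarrow> nat
    \<Rightarrow> (nat \<times> nat \<Rightarrow> nat) \<Rightarrow> (nat \<times> nat \<Rightarrow> real) \<Rightarrow> real" where
  "gfun D F i x \<tau> a u = (1 / real (F \<tau>)) *
      (\<Sum>j\<in>{1..D}. \<Sum>\<^sub>\<infinity>m\<in>{1..}. real (a (j, m)) * (if u (j, m) \<le> x j then 1 else 0)) - x i"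

definition eucl_dist :: "nat \<Rightarrow> (nat \<Rightarrow> real) \<Rightarrow> (nat \<Rightarrow> real) \<Rightarrow> real" where
  "eucl_dist D x z = sqrt (\<Sum>j\<in>{1..D}. (x j - z j)^2)"

end

theory Submission
  imports Defs
begin

text \<open>
Replacing x by z changes g_i only through the indicators 1{u_jm <= x_j} that flip, namely those
with u_jm between x_j and z_j. So |g_i(z) - g_i(x)| is at most |z_i - x_i| plus 1/F(tau) times the
total size of the families whose label falls in such an interval. Under the uniform labels each
such indicator has mean |z_j - x_j|, and the family sizes add up to the population size, which
the chain keeps equal to F(tau) (F(r+1) - c_i offspring plus c_i newcomers per step). Hence for
every (tau, a) the u-integral is at most |z_i - x_i| + sum_j |z_j - x_j| <= (D + 1) |x - z|, and
integrating over the law of (tau, a) preserves the bound: K_c = D + 1.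
\<close>

instance multiset :: (countable) countable
proof
  have "surj (mset :: 'a list \<Rightarrow> 'a multiset)"
    by (metis ex_mset surj_def)
  then have "inj (to_nat \<circ> inv (mset :: 'a list \<Rightarrow> 'a multiset))"
    by (intro inj_compose[of to_nat] surj_imp_inj_inv) auto
  then show "\<exists>to_nat :: 'a multiset \<Rightarrow> nat. inj to_nat"
    by (rule exI[of inj])
qed

lemma nn_integral_pmf_pair_le:
  fixes p :: "'a::countable pmf" and f :: "'a \<Rightarrow> 'b \<Rightarrow> ennreal"
  assumes "sigma_finite_measure N"
    and meas: "\<And>t. f t \<in> borel_measurable N"
    and bound: "\<And>t. t \<in> set_pmf p \<Longrightarrow> (\<integral>\<^sup>+u. f t u \<partial>N) \<le> C"
  shows "(\<integral>\<^sup>+(t, u). f t u \<partial>(measure_pmf p \<Otimes>\<^sub>M N)) \<le> C"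
proof -
  interpret N: sigma_finite_measure N by fact
  have "case_prod f \<in> borel_measurable (count_space UNIV \<Otimes>\<^sub>M N)"
    by (rule measurable_pair_measure_countable1) (auto intro: meas)
  then have "case_prod f \<in> borel_measurable (measure_pmf p \<Otimes>\<^sub>M N)"
    by (simp cong: measurable_cong_sets)
  then have "(\<integral>\<^sup>+(t, u). f t u \<partial>(measure_pmf p \<Otimes>\<^sub>M N)) = (\<integral>\<^sup>+t. (\<integral>\<^sup>+u. f t u \<partial>N) \<partial>p)"
    by (simp add: N.nn_integral_fst[symmetric])
  also have "\<dots> \<le> (\<integral>\<^sup>+t. C \<partial>p)"
    by (rule nn_integral_mono_AE) (simp add: AE_measure_pmf_iff bound)
  finally show ?thesis
    by (simp add: measure_pmf.emeasure_space_1)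
qed

lemma size_picks: "N \<in> set_pmf (picks M n) \<Longrightarrow> size N = n"
  by (induction n arbitrary: N) auto

lemma card_UN_singleton_times:
  assumes "finite S" "\<And>j. finite (B j)"
  shows "card (\<Union>j\<in>S. {j} \<times> B j) = (\<Sum>j\<in>S. card (B j))"
  using assms by (subst card_UN_disjoint) (auto simp: card_cartesian_product_singleton)

lemma size_new_families: "size (new_families D c i r) = (\<Sum>j\<in>{1..D} - {i}. c j i)"
  unfolding new_families_def by (simp add: card_UN_singleton_times)

lemma size_famproc:
  assumes balance: "csum D c i = (\<Sum>j\<in>{1..D} - {i}. c j i)"
    and F: "\<forall>n\<ge>1. csum D c i \<le> F n"
  shows "a \<in> set_pmf (famproc D c F i k) \<Longrightarrow> size a = F (k + 1)"
proof (induction k arbitrary: a)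
  case 0
  have "size (init_state D c F i) = F 1 - csum D c i + (\<Sum>j\<in>{1..D} - {i}. c j i)"
    unfolding init_state_def by (simp add: card_UN_singleton_times)
  with 0 show ?case using balance F by simp
next
  case (Suc k)
  then obtain b N where "b \<in> set_pmf (famproc D c F i k)"
    and N: "N \<in> set_pmf (picks b (F (k + 2) - csum D c i))"
    and "a = N + new_families D c i (Suc k)"
    by (auto simp: step_def)
  then have "size a = F (k + 2) - csum D c i + csum D c i"
    using size_picks[OF N] balance by (simp add: size_new_families)
  with F show ?case by simp
qed

lemma size_Achain:
  assumes "csum D c i = (\<Sum>j\<in>{1..D} - {i}. c j i)" "\<forall>n\<ge>1. csum D c i \<le> F n"
    and "1 \<le> \<tau>" "a \<in> set_pmf (Achain D c F i \<tau>)"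
  shows "size a = F \<tau>"
  using size_famproc[OF assms(1,2) assms(4)[unfolded Achain_def]] assms(3) by simp

definition families_of_type :: "(nat \<times> nat) multiset \<Rightarrow> nat \<Rightarrow> nat set" where
  "families_of_type a j = {m. 1 \<le> m \<and> count a (j, m) \<noteq> 0}"

lemma finite_families_of_type: "finite (families_of_type a j)"
proof (rule finite_subset)
  show "families_of_type a j \<subseteq> snd ` set_mset a"
    by (force simp: families_of_type_def image_iff)
qed simp

lemma sum_count_families_of_type_le_size:
  "(\<Sum>m\<in>families_of_type a j. count a (j, m)) \<le> size a"
proof -
  have "(\<Sum>m\<in>families_of_type a j. count a (j, m)) = (\<Sum>p\<in>Pair j ` families_of_type a j. count a p)"
    by (subst sum.reindex) (auto simp: inj_on_def)
  also have "\<dots> \<le> (\<Sum>p\<in>set_mset a. count a p)"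
    by (rule sum_mono2) (auto simp: families_of_type_def)
  finally show ?thesis
    by (simp add: size_multiset_overloaded_eq)
qed

lemma infsum_count_eq_sum_families_of_type:
  "(\<Sum>\<^sub>\<infinity>m\<in>{1..}. real (count a (j, m)) * f m) = (\<Sum>m\<in>families_of_type a j. real (count a (j, m)) * f m)"
proof -
  have "(\<Sum>\<^sub>\<infinity>m\<in>{1..}. real (count a (j, m)) * f m) = (\<Sum>\<^sub>\<infinity>m\<in>families_of_type a j. real (count a (j, m)) * f m)"
    by (rule infsum_cong_neutral) (auto simp: families_of_type_def count_eq_zero_iff)
  then show ?thesis
    by (simp add: finite_families_of_type)
qed

lemma gfun_count_eq:
  "gfun D F i x \<tau> (count a) u = (\<Sum>j\<in>{1..D}. \<Sum>m\<in>families_of_type a j.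
      real (count a (j, m)) * (if u (j, m) \<le> x j then 1 else 0)) / real (F \<tau>) - x i"
  unfolding gfun_def infsum_count_eq_sum_families_of_type by simp

definition gfun_diff_majorant :: "nat \<Rightarrow> (nat \<Rightarrow> nat) \<Rightarrow> nat \<Rightarrow> (nat \<Rightarrow> real) \<Rightarrow> (nat \<Rightarrow> real)
    \<Rightarrow> nat \<Rightarrow> (nat \<times> nat) multiset \<Rightarrow> (nat \<times> nat \<Rightarrow> real) \<Rightarrow> real" where
  "gfun_diff_majorant D F i x z \<tau> a u = \<bar>z i - x i\<bar> + (\<Sum>j\<in>{1..D}. \<Sum>m\<in>families_of_type a j.
      real (count a (j, m)) / real (F \<tau>) * indicator {min (x j) (z j)<..max (x j) (z j)} (u (j, m)))"

lemma abs_gfun_diff_le_majorant: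
  "\<bar>gfun D F i z \<tau> (count a) u - gfun D F i x \<tau> (count a) u\<bar> \<le> gfun_diff_majorant D F i x z \<tau> a u"
proof -
  define jump where "jump j m = real (count a (j, m)) *
      ((if u (j, m) \<le> z j then 1 else 0) - (if u (j, m) \<le> x j then 1 else 0))" for j m
  define S where "S = (\<Sum>j\<in>{1..D}. \<Sum>m\<in>families_of_type a j. jump j m)"
  define B where "B = (\<Sum>j\<in>{1..D}. \<Sum>m\<in>families_of_type a j.
      real (count a (j, m)) * indicator {min (x j) (z j)<..max (x j) (z j)} (u (j, m)))"
  have "\<bar>S\<bar> \<le> (\<Sum>j\<in>{1..D}. \<bar>\<Sum>m\<in>families_of_type a j. jump j m\<bar>)"
    unfolding S_def by (rule sum_abs)
  also have "\<dots> \<le> (\<Sum>j\<in>{1..D}. \<Sum>m\<in>families_of_type a j. \<bar>jump j m\<bar>)"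
    by (intro sum_mono sum_abs)
  also have "\<dots> = B"
    unfolding B_def jump_def by (intro sum.cong refl) (auto simp: indicator_def)
  finally have "\<bar>S\<bar> \<le> B" .
  have "gfun D F i z \<tau> (count a) u - gfun D F i x \<tau> (count a) u = S / real (F \<tau>) - (z i - x i)"
    by (simp add: gfun_count_eq S_def jump_def sum_subtractf right_diff_distrib diff_divide_distrib)
  also have "\<bar>\<dots>\<bar> \<le> \<bar>z i - x i\<bar> + \<bar>S\<bar> / real (F \<tau>)"
    using abs_triangle_ineq4[of "S / real (F \<tau>)" "z i - x i"] by simp
  also have "\<dots> \<le> \<bar>z i - x i\<bar> + B / real (F \<tau>)"
    using \<open>\<bar>S\<bar> \<le> B\<close> by (simp add: divide_right_mono)
  also have "\<dots> = gfun_diff_majorant D F i x z \<tau> a u"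
    by (simp add: gfun_diff_majorant_def B_def sum_divide_distrib)
  finally show ?thesis .
qed

lemma prob_space_Umeas: "prob_space (Umeas D)"
  unfolding Umeas_def by (intro prob_space_PiM prob_space_uniform_measure) auto

lemma measurable_Umeas_component:
  assumes "j \<in> {1..D}" "1 \<le> m"
  shows "(\<lambda>u. u (j, m)) \<in> measurable (Umeas D) (uniform_measure lborel {0..1::real})"
  unfolding Umeas_def using assms by (intro measurable_component_singleton) auto

lemma nn_integral_Umeas_component_indicator:
  assumes "j \<in> {1..D}" "1 \<le> m" "0 \<le> lo" "lo \<le> hi" "hi \<le> 1"
  shows "(\<integral>\<^sup>+u. indicator {lo<..hi} (u (j, m)) \<partial>Umeas D) = ennreal (hi - lo)"
proof -
  let ?U = "uniform_measure lborel {0..1::real}"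
  have "distr (Umeas D) ?U (\<lambda>u. u (j, m)) = ?U"
    unfolding Umeas_def using assms(1,2)
    by (intro distr_PiM_component prob_space_uniform_measure) auto
  then have "(\<integral>\<^sup>+u. indicator {lo<..hi} (u (j, m)) \<partial>Umeas D) = (\<integral>\<^sup>+y. indicator {lo<..hi} y \<partial>?U)"
    using nn_integral_distr[OF measurable_Umeas_component[OF assms(1,2)], of "indicator {lo<..hi}"]
    by simp
  also have "\<dots> = (\<integral>\<^sup>+y. indicator {lo<..hi} y * indicator {0..1} y \<partial>lborel) / emeasure lborel {0..1::real}"
    by (rule nn_integral_uniform_measure) auto
  also have "(\<lambda>y. indicator {lo<..hi} y * indicator {0..1} y :: ennreal) = indicator {lo<..hi}"
    using assms(3-5) by (auto simp: indicator_def)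
  finally show ?thesis
    using assms(4) by (simp add: divide_ennreal_def)
qed

lemma borel_measurable_Umeas_component_indicator:
  assumes "j \<in> {1..D}" "1 \<le> m"
  shows "(\<lambda>u. indicator {lo<..hi} (u (j, m)) :: 'a::{zero_neq_one, topological_space}) \<in> borel_measurable (Umeas D)"
  by (rule measurable_compose[OF measurable_Umeas_component[OF assms]]) (simp cong: measurable_cong_sets)

lemma sum_count_families_of_type_div_size_le_1:
  "(\<Sum>m\<in>families_of_type a j. real (count a (j, m)) / real (size a)) \<le> 1"
proof (cases "size a = 0")
  case False
  have "real (\<Sum>m\<in>families_of_type a j. count a (j, m)) \<le> real (size a)"
    by (simp only: of_nat_le_iff sum_count_families_of_type_le_size)
  moreover from False have "0 < real (size a)"
    by (simp del: size_eq_0_iff_empty)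
  ultimately show ?thesis
    by (simp add: sum_divide_distrib[symmetric] del: size_eq_0_iff_empty)
qed simp

lemma borel_measurable_gfun_diff_majorant:
  "(\<lambda>u. gfun_diff_majorant D F i x z \<tau> a u) \<in> borel_measurable (Umeas D)"
  unfolding gfun_diff_majorant_def
  by (intro borel_measurable_add borel_measurable_sum borel_measurable_times measurable_const
      borel_measurable_Umeas_component_indicator) (auto simp: families_of_type_def)

lemma ennreal_gfun_diff_majorant:
  "ennreal (gfun_diff_majorant D F i x z \<tau> a u) = ennreal \<bar>z i - x i\<bar> +
    (\<Sum>j\<in>{1..D}. \<Sum>m\<in>families_of_type a j. ennreal (real (count a (j, m)) / real (F \<tau>)) *
      indicator {min (x j) (z j)<..max (x j) (z j)} (u (j, m)))"
proof -
  have ennreal_double_sum: "ennreal (\<Sum>j\<in>J. \<Sum>m\<in>M j. f j m) = (\<Sum>j\<in>J. \<Sum>m\<in>M j. ennreal (f j m))"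
    if "\<And>j m. 0 \<le> f j m" for J M and f :: "nat \<Rightarrow> nat \<Rightarrow> real"
    using that by (simp add: sum_nonneg)
  define w where "w j m = real (count a (j, m)) / real (F \<tau>)" for j m
  have "0 \<le> w j m" for j m
    by (simp add: w_def)
  then show ?thesis
    unfolding gfun_diff_majorant_def w_def[symmetric]
    by (simp add: sum_nonneg ennreal_double_sum ennreal_mult' ennreal_indicator)
qed

lemma nn_integral_double_sum:
  assumes "\<And>j m. j \<in> J \<Longrightarrow> m \<in> M j \<Longrightarrow> f j m \<in> borel_measurable N"
  shows "(\<integral>\<^sup>+u. (\<Sum>j\<in>J. \<Sum>m\<in>M j. f j m u) \<partial>N) = (\<Sum>j\<in>J. \<Sum>m\<in>M j. \<integral>\<^sup>+u. f j m u \<partial>N)"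
proof -
  have "(\<integral>\<^sup>+u. (\<Sum>j\<in>J. \<Sum>m\<in>M j. f j m u) \<partial>N) = (\<Sum>j\<in>J. \<integral>\<^sup>+u. (\<Sum>m\<in>M j. f j m u) \<partial>N)"
    using assms by (intro nn_integral_sum borel_measurable_sum) auto
  also have "\<dots> = (\<Sum>j\<in>J. \<Sum>m\<in>M j. \<integral>\<^sup>+u. f j m u \<partial>N)"
    using assms by (intro sum.cong refl nn_integral_sum) auto
  finally show ?thesis .
qed

lemma nn_integral_gfun_diff_majorant:
  assumes "\<forall>j\<in>{1..D}. x j \<in> {0..1} \<and> z j \<in> {0..1}"
  shows "(\<integral>\<^sup>+u. gfun_diff_majorant D F i x z \<tau> a u \<partial>Umeas D) = ennreal (\<bar>z i - x i\<bar> +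
      (\<Sum>j\<in>{1..D}. \<Sum>m\<in>families_of_type a j. real (count a (j, m)) / real (F \<tau>) * \<bar>z j - x j\<bar>))"
proof -
  interpret prob_space "Umeas D" by (rule prob_space_Umeas)
  define I where "I j = {min (x j) (z j)<..max (x j) (z j)}" for j
  define w where "w j m = real (count a (j, m)) / real (F \<tau>)" for j m
  define summand where "summand j m u = ennreal (w j m) * indicator (I j) (u (j, m))" for j m u
  have w_nonneg: "0 \<le> w j m" for j m
    by (simp add: w_def)
  have summand_meas: "summand j m \<in> borel_measurable (Umeas D)"
    if "j \<in> {1..D}" "m \<in> families_of_type a j" for j m
    using that unfolding summand_def I_def
    by (intro borel_measurable_times_ennreal borel_measurable_const borel_measurable_Umeas_component_indicator)
      (auto simp: families_of_type_def)
  have summand_integral: "(\<integral>\<^sup>+u. summand j m u \<partial>Umeas D) = ennreal (w j m * \<bar>z j - x j\<bar>)"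
    if "j \<in> {1..D}" "m \<in> families_of_type a j" for j m
  proof -
    have "max (x j) (z j) - min (x j) (z j) = \<bar>z j - x j\<bar>"
      by (simp add: max_def min_def)
    with that assms show ?thesis
      unfolding summand_def I_def
      by (simp add: nn_integral_cmult borel_measurable_Umeas_component_indicator families_of_type_def
          nn_integral_Umeas_component_indicator w_nonneg ennreal_mult)
  qed
  have "(\<integral>\<^sup>+u. gfun_diff_majorant D F i x z \<tau> a u \<partial>Umeas D)
      = (\<integral>\<^sup>+u. ennreal \<bar>z i - x i\<bar> + (\<Sum>j\<in>{1..D}. \<Sum>m\<in>families_of_type a j. summand j m u) \<partial>Umeas D)"
    unfolding ennreal_gfun_diff_majorant summand_def I_def w_def ..
  also have "\<dots> = ennreal \<bar>z i - x i\<bar> + (\<Sum>j\<in>{1..D}. \<Sum>m\<in>families_of_type a j. \<integral>\<^sup>+u. summand j m u \<partial>Umeas D)"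
  proof -
    have "(\<lambda>u. \<Sum>j\<in>{1..D}. \<Sum>m\<in>families_of_type a j. summand j m u) \<in> borel_measurable (Umeas D)"
      by (intro borel_measurable_sum summand_meas)
    then show ?thesis
      by (simp only: nn_integral_add[OF borel_measurable_const] nn_integral_double_sum[OF summand_meas]
          nn_integral_const emeasure_space_1 mult_1_right)
  qed
  also have "\<dots> = ennreal (\<bar>z i - x i\<bar> + (\<Sum>j\<in>{1..D}. \<Sum>m\<in>families_of_type a j. w j m * \<bar>z j - x j\<bar>))"
    by (simp add: summand_integral w_nonneg sum_nonneg)
  finally show ?thesis
    unfolding w_def .
qed

lemma abs_le_eucl_dist:
  assumes "j \<in> {1..D}"
  shows "\<bar>z j - x j\<bar> \<le> eucl_dist D x z"
proof -
  have "(x j - z j)\<^sup>2 \<le> (\<Sum>k\<in>{1..D}. (x k - z k)\<^sup>2)"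
    using assms by (intro member_le_sum) auto
  then have "sqrt ((x j - z j)\<^sup>2) \<le> eucl_dist D x z"
    unfolding eucl_dist_def by (rule real_sqrt_le_mono)
  then show ?thesis
    by simp
qed

lemma nn_integral_gfun_diff_majorant_le:
  assumes xz: "\<forall>j\<in>{1..D}. x j \<in> {0..1} \<and> z j \<in> {0..1}"
    and i: "i \<in> {1..D}" and size: "size a = F \<tau>"
  shows "(\<integral>\<^sup>+u. gfun_diff_majorant D F i x z \<tau> a u \<partial>Umeas D) \<le> ennreal ((real D + 1) * eucl_dist D x z)"
proof -
  have type_bound: "(\<Sum>m\<in>families_of_type a j. real (count a (j, m)) / real (F \<tau>) * \<bar>z j - x j\<bar>)
      \<le> eucl_dist D x z" if "j \<in> {1..D}" for j
  proof -
    have "(\<Sum>m\<in>families_of_type a j. real (count a (j, m)) / real (F \<tau>) * \<bar>z j - x j\<bar>)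
        = (\<Sum>m\<in>families_of_type a j. real (count a (j, m)) / real (size a)) * \<bar>z j - x j\<bar>"
      by (simp add: size sum_distrib_right)
    also have "\<dots> \<le> 1 * \<bar>z j - x j\<bar>"
      by (intro mult_right_mono sum_count_families_of_type_div_size_le_1) simp
    also have "\<dots> \<le> eucl_dist D x z"
      using that by (simp add: abs_le_eucl_dist)
    finally show ?thesis .
  qed
  have "\<bar>z i - x i\<bar> + (\<Sum>j\<in>{1..D}. \<Sum>m\<in>families_of_type a j. real (count a (j, m)) / real (F \<tau>) * \<bar>z j - x j\<bar>)
      \<le> eucl_dist D x z + (\<Sum>j\<in>{1..D}. eucl_dist D x z)"
    using i by (intro add_mono sum_mono type_bound abs_le_eucl_dist)
  also have "\<dots> = (real D + 1) * eucl_dist D x z"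
    by (simp add: algebra_simps)
  finally show ?thesis
    unfolding nn_integral_gfun_diff_majorant[OF xz] by (rule ennreal_leI)
qed

theorem lemmaA1:
  fixes D :: nat and c :: "nat \<Rightarrow> nat \<Rightarrow> nat" and F :: "nat \<Rightarrow> nat" and L :: "nat pmf"
  assumes "D \<ge> 1"
    and "\<forall>i\<in>{1..D}. (\<Sum>j\<in>{1..D} - {i}. c i j) = (\<Sum>j\<in>{1..D} - {i}. c j i)"
    and "set_pmf L \<subseteq> {1..}"
    and "\<forall>n\<ge>1. F n \<ge> 1"
    and "\<forall>n\<ge>1. \<forall>i\<in>{1..D}. csum D c i \<le> F n"
  shows "\<exists>K::real. \<forall>x z. (\<forall>j\<in>{1..D}. x j \<in> {0..1} \<and> z j \<in> {0..1}) \<longrightarrow>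
           (\<forall>i\<in>{1..D}.
             (\<integral>\<^sup>+ ((\<tau>, a), u). ennreal \<bar>gfun D F i z \<tau> (count a) u - gfun D F i x \<tau> (count a) u\<bar>
                 \<partial>(measure_pmf (Afrak L D c F i) \<Otimes>\<^sub>M Umeas D))
             \<le> ennreal (K * eucl_dist D x z))"
proof (intro exI[of _ "real D + 1"] allI impI ballI)
  fix x z :: "nat \<Rightarrow> real" and i :: nat
  assume xz: "\<forall>j\<in>{1..D}. x j \<in> {0..1} \<and> z j \<in> {0..1}" and i: "i \<in> {1..D}"
  have balance: "csum D c i = (\<Sum>j\<in>{1..D} - {i}. c j i)"
    using assms(2) i by (simp add: csum_def)
  have "(\<integral>\<^sup>+ ((\<tau>, a), u). ennreal \<bar>gfun D F i z \<tau> (count a) u - gfun D F i x \<tau> (count a) u\<bar>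
          \<partial>(measure_pmf (Afrak L D c F i) \<Otimes>\<^sub>M Umeas D))
      \<le> (\<integral>\<^sup>+ ((\<tau>, a), u). ennreal (gfun_diff_majorant D F i x z \<tau> a u)
          \<partial>(measure_pmf (Afrak L D c F i) \<Otimes>\<^sub>M Umeas D))"
    by (intro nn_integral_mono) (auto simp: split_beta intro!: ennreal_leI abs_gfun_diff_le_majorant)
  also have "\<dots> \<le> ennreal ((real D + 1) * eucl_dist D x z)"
  proof (rule nn_integral_pmf_pair_le)
    show "sigma_finite_measure (Umeas D)"
      using prob_space_Umeas by (rule prob_space_imp_sigma_finite)
    show "(case t of (\<tau>, a) \<Rightarrow> \<lambda>u. ennreal (gfun_diff_majorant D F i x z \<tau> a u))
        \<in> borel_measurable (Umeas D)" for t
      by (cases t) (simp add: measurable_compose[OF borel_measurable_gfun_diff_majorant measurable_ennreal])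
    fix t assume "t \<in> set_pmf (Afrak L D c F i)"
    then obtain \<tau> a where t: "t = (\<tau>, a)" and "\<tau> \<in> set_pmf L" "a \<in> set_pmf (Achain D c F i \<tau>)"
      by (auto simp: Afrak_def)
    with assms(3,5) i have "size a = F \<tau>"
      by (intro size_Achain[OF balance]) auto
    with xz i show "(\<integral>\<^sup>+u. (case t of (\<tau>, a) \<Rightarrow> \<lambda>u. ennreal (gfun_diff_majorant D F i x z \<tau> a u)) u \<partial>Umeas D)
        \<le> ennreal ((real D + 1) * eucl_dist D x z)"
      by (simp add: t nn_integral_gfun_diff_majorant_le)
  qed
  finally show "(\<integral>\<^sup>+ ((\<tau>, a), u). ennreal \<bar>gfun D F i z \<tau> (count a) u - gfun D F i x \<tau> (count a) u\<bar>
      \<partial>(measure_pmf (Afrak L D c F i) \<Otimes>\<^sub>M Umeas D)) \<le> ennreal ((real D + 1) * eucl_dist D x z)" .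
qed

end
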